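(* For every $n\ge2$, $$\sum_{k=1}^{n-2}k^2\,f_{k,n}=\frac13(4n+1)(2n-3)!!-\frac32(2n-2)!!.$$
   Context: $\mathcal{T}_n$ is the set of fully resolved (binary) rooted trees with leaves bijectively labeled by $\{1,\dots,n\}$, and $f_{k,n}=|\{T\in\mathcal{T}_n:\varphi_T(1,2)=k\}|$, where $\varphi_T(1,2)$ is the depth (number of arcs from the root) of the lowest common ancestor of leaves $1$ and $2$. Double factorials: $(2m-1)!!=(2m-1)(2m-3)\cdots1$, $(2m)!!=(2m)(2m-2)\cdots2$, $0!!=1$; an empty sum is $0$. *)

theory Defs
  imports Complex_Main
begin

datatype ltree = Leaf nat | Node ltree ltree

fun leaves :: "ltree \<Rightarrow> nat list" where
  "leaves (Leaf x) = [x]"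
| "leaves (Node l r) = leaves l @ leaves r"

definition labelled :: "nat \<Rightarrow> ltree \<Rightarrow> bool" where
  "labelled n t \<longleftrightarrow> distinct (leaves t) \<and> set (leaves t) = {1..n}"

text \<open>Isomorphism of rooted (unordered) trees: children may be swapped at any node.\<close>
inductive tiso :: "ltree \<Rightarrow> ltree \<Rightarrow> bool" where
  leaf: "tiso (Leaf x) (Leaf x)"
| same: "tiso l l' \<Longrightarrow> tiso r r' \<Longrightarrow> tiso (Node l r) (Node l' r')"
| swap: "tiso l l' \<Longrightarrow> tiso r r' \<Longrightarrow> tiso (Node l r) (Node r' l')"

text \<open>The set T_n of fully resolved rooted trees with leaves labelled by {1..n}:
  isomorphism classes of labelled plane binary trees.\<close>
definition Tn :: "nat \<Rightarrow> ltree set set" where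
  "Tn n = {t. labelled n t} // {(s, t). tiso s t}"

text \<open>Depth (number of arcs from the root) of the lowest common ancestor of leaves a and b.\<close>
fun lca_depth :: "nat \<Rightarrow> nat \<Rightarrow> ltree \<Rightarrow> nat" where
  "lca_depth a b (Leaf x) = 0"
| "lca_depth a b (Node l r) =
     (if a \<in> set (leaves l) \<and> b \<in> set (leaves l) then Suc (lca_depth a b l)
      else if a \<in> set (leaves r) \<and> b \<in> set (leaves r) then Suc (lca_depth a b r)
      else 0)"

definition f :: "nat \<Rightarrow> nat \<Rightarrow> nat" where
  "f k n = card {T \<in> Tn n. \<exists>t\<in>T. lca_depth 1 2 t = k}"

fun dfact :: "nat \<Rightarrow> nat" where
  "dfact 0 = 1"
| "dfact (Suc 0) = 1"
| "dfact (Suc (Suc m)) = Suc (Suc m) * dfact m"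

end

theory Submission
  imports Defs "HOL-Library.Multiset"
begin

text \<open>
  Count plane trees (children ordered) instead of trees: each fully resolved tree on n leaves
  corresponds to exactly 2^(n-1) plane trees, one swap choice per internal node, all with the
  same depth D of the lowest common ancestor of leaves 1 and 2.  A plane tree with n + 1 leaves
  arises in exactly one way from one with n leaves by grafting leaf n + 1 above one of its
  2n - 1 nodes, to the left or to the right; of these 4n - 2 grafts, the 2(D + 1) above the nodes
  from the root down to the ancestor raise D by one and the others keep it.  Hence the moments
  of D over plane trees of orders 0, 1, 2 satisfy a triangular system of linear recurrences,
  solved by double factorials.
\<close>

lemma leaves_nonempty: "leaves t \<noteq> []"
  by (induction t) auto

fun grafts :: "nat \<Rightarrow> ltree \<Rightarrow> ltree list" where
  "grafts x (Leaf y) = [Node (Leaf x) (Leaf y), Node (Leaf y) (Leaf x)]"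
| "grafts x (Node l r) = [Node (Leaf x) (Node l r), Node (Node l r) (Leaf x)]
     @ map (\<lambda>l'. Node l' r) (grafts x l) @ map (\<lambda>r'. Node l r') (grafts x r)"

fun prune :: "nat \<Rightarrow> ltree \<Rightarrow> ltree" where
  "prune x (Leaf y) = Leaf y"
| "prune x (Node l r) = (if l = Leaf x then r else if r = Leaf x then l
     else if x \<in> set (leaves l) then Node (prune x l) r else Node l (prune x r))"

lemma Leaf_notin_grafts: "Leaf y \<notin> set (grafts x t)"
  by (induction t) auto

lemma mset_leaves_grafts: "t' \<in> set (grafts x t) \<Longrightarrow> mset (leaves t') = add_mset x (mset (leaves t))"
  by (induction t arbitrary: t') auto

lemma set_leaves_grafts: "t' \<in> set (grafts x t) \<Longrightarrow> set (leaves t') = insert x (set (leaves t))"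
  by (metis mset_leaves_grafts set_mset_add_mset_insert set_mset_mset)

lemma length_leaves_pos: "0 < length (leaves t)"
  using leaves_nonempty by simp

lemma length_grafts: "length (grafts x t) = 4 * length (leaves t) - 2"
proof (induction t)
  case (Node l r)
  then show ?case
    by simp (use length_leaves_pos[of l] length_leaves_pos[of r] in linarith)
qed simp

lemma grafts_prune: "x \<in> set (leaves t) \<Longrightarrow> t \<noteq> Leaf x \<Longrightarrow> t \<in> set (grafts x (prune x t))"
proof (induction t)
  case (Node l r)
  consider "l = Leaf x" | "r = Leaf x" | "l \<noteq> Leaf x" "r \<noteq> Leaf x" "x \<in> set (leaves l)"
    | "l \<noteq> Leaf x" "r \<noteq> Leaf x" "x \<in> set (leaves r)" "x \<notin> set (leaves l)"
    using Node.prems by auto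
  then show ?case
  proof cases
    case 1
    then show ?thesis by (cases r) auto
  next
    case 2
    then show ?thesis by (cases l) auto
  qed (use Node.IH in auto)
qed simp

lemma prune_grafts: "x \<notin> set (leaves t) \<Longrightarrow> t' \<in> set (grafts x t) \<Longrightarrow> prune x t' = t"
proof (induction t arbitrary: t')
  case (Node l r)
  then show ?case
    using Leaf_notin_grafts set_leaves_grafts by fastforce
qed auto

lemma distinct_grafts: "x \<notin> set (leaves t) \<Longrightarrow> distinct (grafts x t)"
proof (induction t)
  case (Node l r)
  then show ?case
    by (auto simp: distinct_map inj_on_def Leaf_notin_grafts dest: set_leaves_grafts)
qed auto

lemma sum_list_grafts_const:
  assumes "\<And>t'. t' \<in> set (grafts x t) \<Longrightarrow> h t' = c"
  shows "(\<Sum>t'\<leftarrow>grafts x t. h t') = (4 * real (length (leaves t)) - 2) * (c :: real)"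
proof -
  have "(\<Sum>t'\<leftarrow>grafts x t. h t') = real (length (grafts x t)) * c"
    using assms by (simp add: map_idI sum_list_triv cong: map_cong)
  then show ?thesis
    using length_leaves_pos[of t] by (simp add: length_grafts of_nat_diff del: length_greater_0_conv)
qed

lemma sum_list_grafts_lca_depth:
  fixes g :: "nat \<Rightarrow> real"
  assumes "a \<in> set (leaves t)" "b \<in> set (leaves t)" "x \<notin> set (leaves t)"
  shows "(\<Sum>t'\<leftarrow>grafts x t. g (lca_depth a b t'))
           = (4 * real (length (leaves t)) - 4 - 2 * real (lca_depth a b t)) * g (lca_depth a b t)
             + 2 * (real (lca_depth a b t) + 1) * g (Suc (lca_depth a b t))"
  using assms
proof (induction t arbitrary: g)
  case (Node l r)
  let ?d = "lca_depth a b"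
  have "x \<noteq> a" "x \<noteq> b" "x \<notin> set (leaves l)" "x \<notin> set (leaves r)"
    using Node.prems by auto
  then have top: "(\<Sum>t'\<leftarrow>grafts x (Node l r). g (?d t'))
      = 2 * g (Suc (?d (Node l r)))
        + (\<Sum>l'\<leftarrow>grafts x l. g (?d (Node l' r))) + (\<Sum>r'\<leftarrow>grafts x r. g (?d (Node l r')))"
    using Node.prems by (simp add: o_def)
  consider (both_left) "a \<in> set (leaves l)" "b \<in> set (leaves l)"
    | (both_right) "\<not> (a \<in> set (leaves l) \<and> b \<in> set (leaves l))"
        "a \<in> set (leaves r)" "b \<in> set (leaves r)"
    | (separated) "\<not> (a \<in> set (leaves l) \<and> b \<in> set (leaves l))"
        "\<not> (a \<in> set (leaves r) \<and> b \<in> set (leaves r))"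
    by blast
  then show ?case
  proof cases
    case both_left
    have left: "(\<Sum>l'\<leftarrow>grafts x l. g (?d (Node l' r))) = (\<Sum>l'\<leftarrow>grafts x l. g (Suc (?d l')))"
      using both_left by (auto intro!: arg_cong[where f = sum_list] simp: set_leaves_grafts)
    have right: "(\<Sum>r'\<leftarrow>grafts x r. g (?d (Node l r'))) = (4 * real (length (leaves r)) - 2) * g (Suc (?d l))"
      using both_left by (intro sum_list_grafts_const) simp
    have IH: "(\<Sum>l'\<leftarrow>grafts x l. g (Suc (?d l')))
        = (4 * real (length (leaves l)) - 4 - 2 * real (?d l)) * g (Suc (?d l))
          + 2 * (real (?d l) + 1) * g (Suc (Suc (?d l)))"
      using Node.IH(1)[of "\<lambda>k. g (Suc k)"] both_left Node.prems by simp
    have "?d (Node l r) = Suc (?d l)"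
      using both_left by simp
    then show ?thesis
      unfolding top left right IH by (simp add: algebra_simps)
  next
    case both_right
    have right: "(\<Sum>r'\<leftarrow>grafts x r. g (?d (Node l r'))) = (\<Sum>r'\<leftarrow>grafts x r. g (Suc (?d r')))"
      using both_right by (auto intro!: arg_cong[where f = sum_list] simp: set_leaves_grafts)
    have left: "(\<Sum>l'\<leftarrow>grafts x l. g (?d (Node l' r))) = (4 * real (length (leaves l)) - 2) * g (Suc (?d r))"
      using both_right \<open>x \<noteq> a\<close> \<open>x \<noteq> b\<close> by (intro sum_list_grafts_const) (auto dest: set_leaves_grafts)
    have IH: "(\<Sum>r'\<leftarrow>grafts x r. g (Suc (?d r')))
        = (4 * real (length (leaves r)) - 4 - 2 * real (?d r)) * g (Suc (?d r))
          + 2 * (real (?d r) + 1) * g (Suc (Suc (?d r)))"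
      using Node.IH(2)[of "\<lambda>k. g (Suc k)"] both_right Node.prems by simp
    have "?d (Node l r) = Suc (?d r)"
      using both_right by auto
    then show ?thesis
      unfolding top left right IH by (simp add: algebra_simps)
  next
    case separated
    have "(\<Sum>l'\<leftarrow>grafts x l. g (?d (Node l' r))) = (4 * real (length (leaves l)) - 2) * g 0"
      "(\<Sum>r'\<leftarrow>grafts x r. g (?d (Node l r'))) = (4 * real (length (leaves r)) - 2) * g 0"
      using separated \<open>x \<noteq> a\<close> \<open>x \<noteq> b\<close> by (intro sum_list_grafts_const; auto dest: set_leaves_grafts)+
    moreover have "?d (Node l r) = 0"
      using separated by simp
    ultimately show ?thesis
      unfolding top by (simp add: algebra_simps)
  qed
qed auto

lemma lca_depth_le:
  "a \<noteq> b \<Longrightarrow> a \<in> set (leaves t) \<Longrightarrow> b \<in> set (leaves t) \<Longrightarrow> lca_depth a b t + 2 \<le> length (leaves t)"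
proof (induction t)
  case (Node l r)
  then show ?case
    by auto (use length_leaves_pos[of l] length_leaves_pos[of r] in linarith)+
qed simp

definition labelled_trees :: "nat \<Rightarrow> ltree set" where
  "labelled_trees n = {t. labelled n t}"

lemma labelled_iff_mset: "labelled n t \<longleftrightarrow> mset (leaves t) = mset_set {1..n}"
proof
  assume "mset (leaves t) = mset_set {1..n}"
  moreover from this have "set (leaves t) = {1..n}"
    by (metis finite_atLeastAtMost finite_set_mset_mset_set set_mset_mset)
  ultimately show "labelled n t"
    unfolding labelled_def by (simp add: distinct_count_atmost_1)
qed (simp add: labelled_def flip: mset_set_set)

lemma length_leaves_labelled: "labelled n t \<Longrightarrow> length (leaves t) = n"
  unfolding labelled_def by (metis card_atLeastAtMost diff_Suc_1 distinct_card)

lemma labelled_trees_Suc: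
  assumes "n \<ge> 1"
  shows "labelled_trees (Suc n) = (\<Union>t\<in>labelled_trees n. set (grafts (Suc n) t))"
proof -
  have interval_Suc: "mset_set {1..Suc n} = add_mset (Suc n) (mset_set {1..n})"
    by (simp add: atLeastAtMostSuc_conv)
  show ?thesis
  proof (intro equalityI subsetI)
    fix t' assume "t' \<in> labelled_trees (Suc n)"
    then have t': "mset (leaves t') = add_mset (Suc n) (mset_set {1..n})"
      unfolding labelled_trees_def labelled_iff_mset interval_Suc by simp
    then have "t' \<noteq> Leaf (Suc n)"
      using assms by (auto simp: mset_set_empty_iff)
    then have "t' \<in> set (grafts (Suc n) (prune (Suc n) t'))"
      using t' by (intro grafts_prune) (simp flip: set_mset_mset)
    moreover from this have "prune (Suc n) t' \<in> labelled_trees n"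
      using t' unfolding labelled_trees_def labelled_iff_mset by (simp add: mset_leaves_grafts)
    ultimately show "t' \<in> (\<Union>t\<in>labelled_trees n. set (grafts (Suc n) t))"
      by blast
  next
    fix t' assume "t' \<in> (\<Union>t\<in>labelled_trees n. set (grafts (Suc n) t))"
    then show "t' \<in> labelled_trees (Suc n)"
      unfolding labelled_trees_def labelled_iff_mset interval_Suc by (auto simp: mset_leaves_grafts)
  qed
qed

lemma labelled_trees_1: "labelled_trees 1 = {Leaf 1}"
proof -
  have "t = Leaf 1" if "labelled 1 t" for t
  proof (cases t)
    case (Node l r)
    have "length (leaves t) = 1"
      using that by (rule length_leaves_labelled)
    then show ?thesis
      using Node length_leaves_pos[of l] length_leaves_pos[of r] by (simp del: length_greater_0_conv)
  qed (use that in \<open>simp add: labelled_def\<close>)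
  then show ?thesis
    by (auto simp: labelled_trees_def labelled_def)
qed

lemma finite_labelled_trees: "finite (labelled_trees n)"
proof (induction n)
  case 0
  then show ?case by (simp add: labelled_trees_def labelled_def leaves_nonempty)
next
  case (Suc n)
  then show ?case
    using labelled_trees_1 labelled_trees_Suc[of n] by (cases "n = 0") auto
qed

lemma sum_labelled_trees_Suc:
  assumes "n \<ge> 1"
  shows "(\<Sum>t\<in>labelled_trees (Suc n). h t) = (\<Sum>t\<in>labelled_trees n. \<Sum>t'\<leftarrow>grafts (Suc n) t. h t')"
proof -
  have fresh: "Suc n \<notin> set (leaves t)" if "t \<in> labelled_trees n" for t
    using that by (simp add: labelled_trees_def labelled_def)
  have "(\<Sum>t\<in>labelled_trees (Suc n). h t) = (\<Sum>t\<in>labelled_trees n. \<Sum>t'\<in>set (grafts (Suc n) t). h t')"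
    unfolding labelled_trees_Suc[OF assms]
    by (rule sum.UNION_disjoint) (auto simp: finite_labelled_trees disjoint_iff, metis fresh prune_grafts)
  also have "\<dots> = (\<Sum>t\<in>labelled_trees n. \<Sum>t'\<leftarrow>grafts (Suc n) t. h t')"
    using fresh distinct_grafts by (simp add: sum_list_distinct_conv_sum_set)
  finally show ?thesis .
qed

lemma sum_labelled_trees_Suc_lca_depth:
  fixes g :: "nat \<Rightarrow> real"
  assumes "a \<in> {1..n}" "b \<in> {1..n}"
  shows "(\<Sum>t\<in>labelled_trees (Suc n). g (lca_depth a b t))
           = (\<Sum>t\<in>labelled_trees n. (4 * real n - 4 - 2 * real (lca_depth a b t)) * g (lca_depth a b t)
               + 2 * (real (lca_depth a b t) + 1) * g (Suc (lca_depth a b t)))"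
proof -
  have "n \<ge> 1"
    using assms by simp
  moreover have "(\<Sum>t'\<leftarrow>grafts (Suc n) t. g (lca_depth a b t'))
      = (4 * real n - 4 - 2 * real (lca_depth a b t)) * g (lca_depth a b t)
        + 2 * (real (lca_depth a b t) + 1) * g (Suc (lca_depth a b t))"
    if "t \<in> labelled_trees n" for t
  proof -
    have "labelled n t"
      using that by (simp add: labelled_trees_def)
    then show ?thesis
      using assms by (simp add: sum_list_grafts_lca_depth length_leaves_labelled labelled_def)
  qed
  ultimately show ?thesis
    by (simp add: sum_labelled_trees_Suc)
qed

lemma sum_labelled_trees_2:
  "(\<Sum>t\<in>labelled_trees 2. h t) = h (Node (Leaf 2) (Leaf 1)) + h (Node (Leaf 1) (Leaf 2))"
  using sum_labelled_trees_Suc[of 1 h] unfolding labelled_trees_1 Suc_1 by simp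

definition lca_depth_moment :: "nat \<Rightarrow> nat \<Rightarrow> real" where
  "lca_depth_moment j n = (\<Sum>t\<in>labelled_trees n. real (lca_depth 1 2 t) ^ j)"

lemma lca_depth_moment_Suc:
  assumes "n \<ge> 2"
  shows "lca_depth_moment 0 (Suc n) = (4 * real n - 2) * lca_depth_moment 0 n"
    and "lca_depth_moment 1 (Suc n) = 4 * real n * lca_depth_moment 1 n + 2 * lca_depth_moment 0 n"
    and "lca_depth_moment 2 (Suc n)
           = (4 * real n + 2) * lca_depth_moment 2 n + 6 * lca_depth_moment 1 n + 2 * lca_depth_moment 0 n"
proof -
  have "1 \<in> {1..n}" "2 \<in> {1..n}"
    using assms by auto
  note step = sum_labelled_trees_Suc_lca_depth[OF this, of "\<lambda>k. real k ^ _"]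
  let ?d = "\<lambda>t. real (lca_depth 1 2 t)"
  have "lca_depth_moment 0 (Suc n) = (\<Sum>t\<in>labelled_trees n. 4 * real n - 2)"
    unfolding lca_depth_moment_def step by (simp add: algebra_simps)
  then show "lca_depth_moment 0 (Suc n) = (4 * real n - 2) * lca_depth_moment 0 n"
    by (simp add: lca_depth_moment_def)
  have "lca_depth_moment 1 (Suc n) = (\<Sum>t\<in>labelled_trees n. 4 * real n * ?d t + 2)"
    unfolding lca_depth_moment_def step by (intro sum.cong) (simp_all add: algebra_simps)
  then show "lca_depth_moment 1 (Suc n) = 4 * real n * lca_depth_moment 1 n + 2 * lca_depth_moment 0 n"
    by (simp add: lca_depth_moment_def sum.distrib sum_distrib_left)
  have "lca_depth_moment 2 (Suc n) = (\<Sum>t\<in>labelled_trees n. (4 * real n + 2) * ?d t ^ 2 + 6 * ?d t + 2)"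
    unfolding lca_depth_moment_def step by (intro sum.cong) (simp_all add: algebra_simps power2_eq_square)
  then show "lca_depth_moment 2 (Suc n)
      = (4 * real n + 2) * lca_depth_moment 2 n + 6 * lca_depth_moment 1 n + 2 * lca_depth_moment 0 n"
    by (simp add: lca_depth_moment_def sum.distrib sum_distrib_left)
qed

lemma dfact_add_2: "dfact (m + 2) = (m + 2) * dfact m"
  by (simp add: eval_nat_numeral)

lemma lca_depth_moments_closed_form:
  assumes "n \<ge> 2"
  shows "lca_depth_moment 0 n = 2 ^ (n - 1) * real (dfact (2 * n - 3))
       \<and> lca_depth_moment 1 n = 2 ^ (n - 1) * (real (dfact (2 * n - 2)) / 2 - real (dfact (2 * n - 3)))
       \<and> lca_depth_moment 2 n = 2 ^ (n - 1)
             * ((4 * real n + 1) / 3 * real (dfact (2 * n - 3)) - 3 / 2 * real (dfact (2 * n - 2)))"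
  using assms
proof (induction n rule: nat_induct_at_least)
  case base
  have "lca_depth_moment j 2 = 2 * 0 ^ j" for j
    unfolding lca_depth_moment_def sum_labelled_trees_2[of "\<lambda>t. real (lca_depth 1 2 t) ^ j"] by simp
  from this[of 0] this[of 1] this[of 2] show ?case
    by (simp add: eval_nat_numeral)
next
  case (Suc n)
  define p where "p = (2::real) ^ (n - 1)"
  define u where "u = real (dfact (2 * n - 3))"
  define v where "v = real (dfact (2 * n - 2))"
  have index: "2 * Suc n - 3 = (2 * n - 3) + 2" "2 * Suc n - 2 = (2 * n - 2) + 2"
    using Suc.hyps by arith+
  have dfacts: "real (dfact (2 * Suc n - 3)) = (2 * real n - 1) * u"
    "real (dfact (2 * Suc n - 2)) = 2 * real n * v"
    unfolding index dfact_add_2 u_def v_def using Suc.hyps by (simp_all add: of_nat_diff algebra_simps)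
  have power: "(2::real) ^ (Suc n - 1) = 2 * p"
    using Suc.hyps by (simp add: p_def power_eq_if)
  have moments: "lca_depth_moment 0 n = p * u" "lca_depth_moment 1 n = p * (v / 2 - u)"
    "lca_depth_moment 2 n = p * ((4 * real n + 1) / 3 * u - 3 / 2 * v)"
    using Suc.IH unfolding p_def u_def v_def by simp_all
  show ?case
    unfolding lca_depth_moment_Suc[OF Suc.hyps] dfacts power moments by (simp add: field_simps)
qed

lemma tiso_refl: "tiso t t"
  by (induction t) (auto intro: tiso.intros)

lemma tiso_sym: "tiso s t \<Longrightarrow> tiso t s"
  by (induction rule: tiso.induct) (auto intro: tiso.intros)

lemma tiso_Leaf_iff: "tiso (Leaf x) s \<longleftrightarrow> s = Leaf x"
  by (auto elim: tiso.cases intro: tiso.intros)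

lemma tiso_Node_iff:
  "tiso (Node l r) s \<longleftrightarrow> (\<exists>a b. tiso l a \<and> tiso r b \<and> (s = Node a b \<or> s = Node b a))"
proof
  assume "tiso (Node l r) s"
  then show "\<exists>a b. tiso l a \<and> tiso r b \<and> (s = Node a b \<or> s = Node b a)"
    by (cases rule: tiso.cases) auto
qed (auto intro: tiso.intros)

lemma tiso_trans: "tiso s t \<Longrightarrow> tiso t u \<Longrightarrow> tiso s u"
proof (induction s t arbitrary: u rule: tiso.induct)
  case (same l l' r r')
  then show ?case by (auto simp: tiso_Node_iff)
next
  case (swap l l' r r')
  then show ?case by (auto simp: tiso_Node_iff)
qed simp

lemma mset_leaves_tiso: "tiso s t \<Longrightarrow> mset (leaves s) = mset (leaves t)"
  by (induction rule: tiso.induct) auto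

lemma set_leaves_tiso: "tiso s t \<Longrightarrow> set (leaves s) = set (leaves t)"
  by (metis mset_leaves_tiso set_mset_mset)

lemma lca_depth_tiso: "tiso s t \<Longrightarrow> distinct (leaves s) \<Longrightarrow> lca_depth a b s = lca_depth a b t"
  by (induction rule: tiso.induct) (auto dest: set_leaves_tiso)

lemma card_tiso_class: "distinct (leaves t) \<Longrightarrow> card {s. tiso t s} = 2 ^ (length (leaves t) - 1)"
proof (induction t)
  case (Leaf x)
  then show ?case by (simp add: tiso_Leaf_iff)
next
  case (Node l r)
  let ?A = "{s. tiso l s}" and ?B = "{s. tiso r s}"
  let ?straight = "case_prod Node ` (?A \<times> ?B)" and ?swapped = "(\<lambda>(a, b). Node b a) ` (?A \<times> ?B)"
  have cards: "card ?A = 2 ^ (length (leaves l) - 1)" "card ?B = 2 ^ (length (leaves r) - 1)"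
    using Node by simp_all
  then have finite: "finite (?A \<times> ?B)"
    by (simp add: card_ge_0_finite)
  have "?straight \<inter> ?swapped = {}"
  proof -
    have "set (leaves l) \<noteq> set (leaves r)"
      using Node.prems leaves_nonempty[of l] by (auto simp: disjoint_iff)
    then show ?thesis by (auto dest: set_leaves_tiso)
  qed
  moreover have "{s. tiso (Node l r) s} = ?straight \<union> ?swapped"
    by (auto simp: tiso_Node_iff)
  ultimately have "card {s. tiso (Node l r) s} = 2 * card (?A \<times> ?B)"
    using finite by (simp add: card_Un_disjoint card_image inj_on_def)
  moreover obtain p q where "length (leaves l) = Suc p" "length (leaves r) = Suc q"
    using length_leaves_pos by (meson gr0_implies_Suc)
  ultimately show ?case
    using cards by (simp add: card_cartesian_product power_add)
qed

lemma labelled_tiso: "tiso s t \<Longrightarrow> labelled n s \<Longrightarrow> labelled n t"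
  by (simp add: labelled_iff_mset mset_leaves_tiso)

lemma tiso_class_eq: "tiso t u \<Longrightarrow> {s. tiso t s} = {s. tiso u s}"
  using tiso_sym tiso_trans by blast

lemma card_labelled_trees_lca_depth:
  "card {t \<in> labelled_trees n. lca_depth 1 2 t = k} = 2 ^ (n - 1) * f k n"
proof -
  let ?S = "{t \<in> labelled_trees n. lca_depth 1 2 t = k}"
  let ?C = "{T \<in> Tn n. \<exists>t\<in>T. lca_depth 1 2 t = k}"
  have closed: "{s. tiso t s} \<subseteq> ?S" if "t \<in> ?S" for t
    using that labelled_tiso lca_depth_tiso by (auto simp: labelled_trees_def labelled_def)
  have Tn_eq: "Tn n = (\<lambda>t. {s. tiso t s}) ` labelled_trees n"
    unfolding Tn_def quotient_def labelled_trees_def by auto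
  have C_eq: "?C = (\<lambda>t. {s. tiso t s}) ` ?S"
  proof (intro equalityI subsetI)
    fix T assume "T \<in> ?C"
    then obtain t s where "t \<in> labelled_trees n" "T = {s. tiso t s}" "tiso t s" "lca_depth 1 2 s = k"
      unfolding Tn_eq by auto
    moreover from this have "s \<in> ?S"
      using labelled_tiso by (auto simp: labelled_trees_def)
    ultimately show "T \<in> (\<lambda>t. {s. tiso t s}) ` ?S"
      using tiso_class_eq by blast
  qed (use tiso_refl Tn_eq in auto)
  have union: "\<Union> ?C = ?S"
    using closed tiso_refl unfolding C_eq by blast
  moreover have "2 ^ (n - 1) * card ?C = card (\<Union> ?C)"
  proof (rule card_partition)
    show "finite ?C" "finite (\<Union> ?C)"
      unfolding union unfolding C_eq using finite_labelled_trees by auto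
    show "card T = 2 ^ (n - 1)" if "T \<in> ?C" for T
      using that card_tiso_class length_leaves_labelled
      unfolding C_eq by (auto simp: labelled_trees_def labelled_def)
    show "T \<inter> T' = {}" if "T \<in> ?C" "T' \<in> ?C" "T \<noteq> T'" for T T'
      using that tiso_class_eq tiso_sym tiso_trans unfolding C_eq by blast
  qed
  ultimately show ?thesis
    by (simp add: f_def)
qed

theorem lemma12:
  fixes n :: nat
  assumes "n \<ge> 2"
  shows "(\<Sum>k=1..n-2. real (k^2 * f k n))
           = 1/3 * (4 * real n + 1) * real (dfact (2*n-3)) - 3/2 * real (dfact (2*n-2))"
proof -
  let ?S = "\<lambda>k. {t \<in> labelled_trees n. lca_depth 1 2 t = k}"
  have depth_range: "lca_depth 1 2 ` labelled_trees n \<subseteq> {0..n-2}"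
    using assms lca_depth_le[of 1 2] length_leaves_labelled
    by (fastforce simp: labelled_trees_def labelled_def)
  have level: "(\<Sum>t\<in>?S k. real (lca_depth 1 2 t) ^ 2) = 2 ^ (n - 1) * real (k^2 * f k n)" for k
  proof -
    have "(\<Sum>t\<in>?S k. real (lca_depth 1 2 t) ^ 2) = (\<Sum>t\<in>?S k. real k ^ 2)"
      by (rule sum.cong) auto
    then show ?thesis
      using card_labelled_trees_lca_depth[of n k] by (simp add: power2_eq_square)
  qed
  have "2 ^ (n - 1) * (\<Sum>k=1..n-2. real (k^2 * f k n)) = (\<Sum>k=1..n-2. \<Sum>t\<in>?S k. real (lca_depth 1 2 t) ^ 2)"
    unfolding level sum_distrib_left ..
  also have "\<dots> = (\<Sum>k=0..n-2. \<Sum>t\<in>?S k. real (lca_depth 1 2 t) ^ 2)"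
    using level[of 0] by (simp add: sum.atLeast_Suc_atMost)
  also have "\<dots> = lca_depth_moment 2 n"
    unfolding lca_depth_moment_def by (rule sum.group[OF finite_labelled_trees finite_atLeastAtMost depth_range])
  also have "\<dots> = 2 ^ (n - 1) * (1/3 * (4 * real n + 1) * real (dfact (2*n-3)) - 3/2 * real (dfact (2*n-2)))"
    using lca_depth_moments_closed_form[OF assms] by (simp add: field_simps)
  finally show ?thesis
    by simp
qed

end
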